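(* Consider the opinion--action model described in the context with $\phi\in(0,1)$ and arbitrary initial values, and its augmented state matrices $P(t)$. Then for every $t\ge1$, the digraph $\mathcal{G}(P(t))$ has one of the following structures: (i) it is strongly connected; (ii) its condensation digraph consists of one sink and one or more singleton sources.
   Context: Fix an integer $n\ge 1$, agent set $\mathcal{V}=\{1,\dots,n\}$, a confidence threshold $\epsilon\in[0,1]$ and a decision weight $\phi\in[0,1]$. Each agent $i$ has opinion $x_i(t)\in[0,1]$ and action $y_i(t)\in[0,1]$. For $t\in\mathbb{Z}_{\ge0}$ the model evolves by: $\mathcal{N}_i(t)=\{j\in\mathcal{V}\mid j\neq i,\ |x_i(t)-y_j(t)|\le\epsilon\}$; $x_i(t+1)=\frac{x_i(t)+\sum_{j\in\mathcal{N}_i(t)}y_j(t)}{|\mathcal{N}_i(t)|+1}$; $y_i(t+1)=\phi\,x_i(t+1)+(1-\phi)\,y_{\mathrm{avg}}(t)$ with $y_{\mathrm{avg}}(t)=\frac1n\sum_{k=1}^n y_k(t)$. For $t\ge1$, $P(t)=\begin{bmatrix}P_{11}(t)&P_{12}(t)\\ P_{21}&P_{22}\end{bmatrix}\in\mathbb{R}^{2n\times2n}$ with $n\times n$ blocks: $[P_{11}(t)]_{ij}=\frac{1}{|\mathcal{N}_i(t)|+1}$ if $j=i$, $\frac{\phi}{|\mathcal{N}_i(t)|+1}$ if $j\in\mathcal{N}_i(t)$, and $0$ otherwise; $[P_{12}(t)]_{ij}=\frac{(1-\phi)|\mathcal{N}_i(t)|}{(|\mathcal{N}_i(t)|+1)n}$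 for all $i,j$; $P_{21}=\phi I_n$; $P_{22}=\frac{1-\phi}{n}\mathbf{1}_n\mathbf{1}_n^\top$. (With $z_i(t)=x_i(t)$, $z_{n+i}(t)=y_i(t-1)$ one has $\mathbf{z}(t+1)=P(t)\mathbf{z}(t)$.) For a nonnegative matrix $A\in\mathbb{R}^{m\times m}$, $\mathcal{G}(A)$ is the digraph on $\{1,\dots,m\}$ with a directed edge $(j,i)$ (from $j$ to $i$) iff $a_{ij}>0$. A strongly connected component (SCC) is a maximal strongly connected subgraph; the condensation digraph has the SCCs as nodes and an edge from SCC$_a$ to SCC$_b$ ($a\neq b$) iff some node of SCC$_a$ has an edge to some node of SCC$_b$. A source is a node with no incoming edges, a sink a node with no outgoing edges; a singleton SCC has exactly one node. *)

theory Defs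
  imports Complex_Main
begin

text \<open>Agents are indexed 0,...,n-1 (the paper uses 1,...,n).
  Opinions and actions are trajectories  x, y :: nat => nat => real,
  with x t i the opinion of agent i at time t.\<close>

definition nbrs :: "nat \<Rightarrow> real \<Rightarrow> (nat \<Rightarrow> nat \<Rightarrow> real) \<Rightarrow> (nat \<Rightarrow> nat \<Rightarrow> real)
                     \<Rightarrow> nat \<Rightarrow> nat \<Rightarrow> nat set" where
  "nbrs n \<epsilon> x y t i = {j. j < n \<and> j \<noteq> i \<and> \<bar>x t i - y t j\<bar> \<le> \<epsilon>}"

definition oa_model :: "nat \<Rightarrow> real \<Rightarrow> real \<Rightarrow> (nat \<Rightarrow> nat \<Rightarrow> real) \<Rightarrow> (nat \<Rightarrow> nat \<Rightarrow> real) \<Rightarrow> bool" where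
  "oa_model n \<epsilon> \<phi> x y \<longleftrightarrow>
     (\<forall>t. \<forall>i<n.
        x (Suc t) i = (x t i + (\<Sum>j\<in>nbrs n \<epsilon> x y t i. y t j)) / (real (card (nbrs n \<epsilon> x y t i)) + 1)
      \<and> y (Suc t) i = \<phi> * x (Suc t) i + (1 - \<phi>) * ((\<Sum>k<n. y t k) / real n))"

text \<open>The augmented 2n x 2n state matrix P(t), indices 0..2n-1; entry (i,j).
  Rows/columns 0..n-1 correspond to x, rows/columns n..2n-1 to y(t-1).\<close>
definition Pmat :: "nat \<Rightarrow> real \<Rightarrow> real \<Rightarrow> (nat \<Rightarrow> nat \<Rightarrow> real) \<Rightarrow> (nat \<Rightarrow> nat \<Rightarrow> real)
                     \<Rightarrow> nat \<Rightarrow> nat \<Rightarrow> nat \<Rightarrow> real" where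
  "Pmat n \<epsilon> \<phi> x y t i j =
     (let N = nbrs n \<epsilon> x y t i in
      if i < n \<and> j < n then
        (if j = i then 1 / (real (card N) + 1)
         else if j \<in> N then \<phi> / (real (card N) + 1) else 0)
      else if i < n \<and> n \<le> j \<and> j < 2*n then
        (1 - \<phi>) * real (card N) / ((real (card N) + 1) * real n)
      else if n \<le> i \<and> i < 2*n \<and> j < n then
        (if j = i - n then \<phi> else 0)
      else if n \<le> i \<and> i < 2*n \<and> n \<le> j \<and> j < 2*n then
        (1 - \<phi>) / real n
      else 0)"

definition gedges :: "nat \<Rightarrow> (nat \<Rightarrow> nat \<Rightarrow> real) \<Rightarrow> (nat \<times> nat) set" where
  "gedges m A = {(j, i). j < m \<and> i < m \<and> A i j > 0}"

definition strongly_connected_mat :: "nat \<Rightarrow> (nat \<Rightarrow> nat \<Rightarrow> real) \<Rightarrow> bool" where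
  "strongly_connected_mat m A \<longleftrightarrow> (\<forall>u<m. \<forall>v<m. (u, v) \<in> (gedges m A)\<^sup>*)"

definition scc_of :: "nat \<Rightarrow> (nat \<Rightarrow> nat \<Rightarrow> real) \<Rightarrow> nat \<Rightarrow> nat set" where
  "scc_of m A v = {u. u < m \<and> (u, v) \<in> (gedges m A)\<^sup>* \<and> (v, u) \<in> (gedges m A)\<^sup>*}"

definition sccs :: "nat \<Rightarrow> (nat \<Rightarrow> nat \<Rightarrow> real) \<Rightarrow> nat set set" where
  "sccs m A = scc_of m A ` {..<m}"

definition cond_edge :: "nat \<Rightarrow> (nat \<Rightarrow> nat \<Rightarrow> real) \<Rightarrow> nat set \<Rightarrow> nat set \<Rightarrow> bool" where
  "cond_edge m A C1 C2 \<longleftrightarrow> C1 \<noteq> C2 \<and> (\<exists>a\<in>C1. \<exists>b\<in>C2. (a, b) \<in> gedges m A)"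

definition cond_source :: "nat \<Rightarrow> (nat \<Rightarrow> nat \<Rightarrow> real) \<Rightarrow> nat set \<Rightarrow> bool" where
  "cond_source m A C \<longleftrightarrow> C \<in> sccs m A \<and> \<not> (\<exists>D\<in>sccs m A. cond_edge m A D C)"

definition cond_sink :: "nat \<Rightarrow> (nat \<Rightarrow> nat \<Rightarrow> real) \<Rightarrow> nat set \<Rightarrow> bool" where
  "cond_sink m A C \<longleftrightarrow> C \<in> sccs m A \<and> \<not> (\<exists>D\<in>sccs m A. cond_edge m A C D)"

definition one_sink_singleton_sources :: "nat \<Rightarrow> (nat \<Rightarrow> nat \<Rightarrow> real) \<Rightarrow> bool" where
  "one_sink_singleton_sources m A \<longleftrightarrow>
     (\<exists>S. cond_sink m A S \<and>
          sccs m A - {S} \<noteq> {} \<and>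
          (\<forall>C\<in>sccs m A - {S}. cond_source m A C \<and> card C = 1))"

end

theory Submission
  imports Defs
begin

text \<open>The positivity pattern of P(t) does not depend on the trajectory (only n \<ge> 1 and
  0 < \<phi> < 1 are needed). All action nodes n, ..., 2n-1 are joined to each other (weight
  (1 - \<phi>)/n), opinion node i feeds action node n+i (weight \<phi>), and the action nodes feed
  every agent with a nonempty neighbourhood. So the action nodes together with those agents
  form one strongly connected set. An agent with empty neighbourhood receives only its
  self-loop, so it is a singleton source of the condensation digraph, and the strongly
  connected set is its unique sink.\<close>

lemma rtrancl_into_loop_only:
  assumes "(a, i) \<in> r\<^sup>*" and "\<And>j. (j, i) \<in> r \<Longrightarrow> j = i"
  shows "a = i"
  using assms(1) by (induction rule: converse_rtrancl_induct) (auto dest: assms(2))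

locale core_with_sources =
  fixes m :: nat and A :: "nat \<Rightarrow> nat \<Rightarrow> real" and S :: "nat set"
  assumes core_subset: "S \<subseteq> {..<m}"
    and core_nonempty: "S \<noteq> {}"
    and core_connected: "\<And>u v. u \<in> S \<Longrightarrow> v \<in> S \<Longrightarrow> (u, v) \<in> (gedges m A)\<^sup>*"
    and inedge_outside_core: "\<And>i j. i < m \<Longrightarrow> i \<notin> S \<Longrightarrow> (j, i) \<in> gedges m A \<Longrightarrow> j = i"
begin

lemma reach_outside_core:
  assumes "i < m" "i \<notin> S" "(a, i) \<in> (gedges m A)\<^sup>*"
  shows "a = i"
  using assms(3) by (rule rtrancl_into_loop_only) (use assms inedge_outside_core in blast)

lemma scc_of_core:
  assumes "v \<in> S"
  shows "scc_of m A v = S"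
proof
  show "scc_of m A v \<subseteq> S"
  proof
    fix u assume u: "u \<in> scc_of m A v"
    show "u \<in> S"
    proof (rule ccontr)
      assume "u \<notin> S"
      with u have "v = u" using reach_outside_core unfolding scc_of_def by blast
      with \<open>u \<notin> S\<close> assms show False by simp
    qed
  qed
  show "S \<subseteq> scc_of m A v"
    using assms core_connected core_subset unfolding scc_of_def by auto
qed

lemma scc_of_outside_core:
  assumes "i < m" "i \<notin> S"
  shows "scc_of m A i = {i}"
  using assms reach_outside_core unfolding scc_of_def by auto

lemma sccs_eq: "sccs m A = insert S ((\<lambda>i. {i}) ` ({..<m} - S))"
proof -
  obtain v where "v \<in> S" using core_nonempty by blast
  have "{..<m} = S \<union> ({..<m} - S)" using core_subset by blast
  then have "sccs m A = scc_of m A ` S \<union> scc_of m A ` ({..<m} - S)"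
    unfolding sccs_def by (metis image_Un)
  also have "scc_of m A ` S = {S}"
    using \<open>v \<in> S\<close> by (auto simp: scc_of_core)
  also have "scc_of m A ` ({..<m} - S) = (\<lambda>i. {i}) ` ({..<m} - S)"
    by (rule image_cong) (auto simp: scc_of_outside_core)
  finally show ?thesis by simp
qed

lemma no_cond_edge_into_outside_core:
  assumes "C \<in> sccs m A" "i < m" "i \<notin> S" "cond_edge m A C {i}"
  shows False
proof -
  from assms(4) obtain a where "C \<noteq> {i}" "a \<in> C" "(a, i) \<in> gedges m A"
    unfolding cond_edge_def by blast
  then have "i \<in> C" using assms(2,3) inedge_outside_core by blast
  with assms(1,3) \<open>C \<noteq> {i}\<close> show False unfolding sccs_eq by blast
qed

lemma cond_sink_core: "cond_sink m A S"
  unfolding cond_sink_def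
proof
  show "S \<in> sccs m A" by (simp add: sccs_eq)
  show "\<not> (\<exists>D\<in>sccs m A. cond_edge m A S D)"
  proof
    assume "\<exists>D\<in>sccs m A. cond_edge m A S D"
    then obtain D where "D \<in> sccs m A" "cond_edge m A S D" by blast
    moreover from this have "D \<noteq> S" by (auto simp: cond_edge_def)
    ultimately obtain i where "i < m" "i \<notin> S" "cond_edge m A S {i}"
      unfolding sccs_eq by blast
    with \<open>S \<in> sccs m A\<close> show False by (rule no_cond_edge_into_outside_core)
  qed
qed

lemma cond_source_outside_core:
  assumes "i < m" "i \<notin> S"
  shows "cond_source m A {i}"
proof -
  have "{i} \<in> sccs m A" using assms by (simp add: sccs_eq)
  then show ?thesis
    unfolding cond_source_def using assms no_cond_edge_into_outside_core by blast
qed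

lemma strongly_connected_or_one_sink_singleton_sources:
  "strongly_connected_mat m A \<or> one_sink_singleton_sources m A"
proof (cases "S = {..<m}")
  case True
  then show ?thesis
    unfolding strongly_connected_mat_def using core_connected by (simp add: True)
next
  case False
  have "one_sink_singleton_sources m A"
    unfolding one_sink_singleton_sources_def
  proof (intro exI conjI ballI)
    show "cond_sink m A S" by (rule cond_sink_core)
    obtain i where "i < m" "i \<notin> S" using False core_subset by blast
    then show "sccs m A - {S} \<noteq> {}" unfolding sccs_eq by blast
  next
    fix C assume "C \<in> sccs m A - {S}"
    then obtain i where "i < m" "i \<notin> S" "C = {i}" unfolding sccs_eq by blast
    then show "cond_source m A C" "card C = 1" by (simp_all add: cond_source_outside_core)
  qed
  then show ?thesis ..
qed

end

definition Pmat_core :: "nat \<Rightarrow> real \<Rightarrow> (nat \<Rightarrow> nat \<Rightarrow> real) \<Rightarrow> (nat \<Rightarrow> nat \<Rightarrow> real)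
                          \<Rightarrow> nat \<Rightarrow> nat set" where
  "Pmat_core n \<epsilon> x y t = {n..<2*n} \<union> {i. i < n \<and> nbrs n \<epsilon> x y t i \<noteq> {}}"

lemma finite_nbrs: "finite (nbrs n \<epsilon> x y t i)"
  unfolding nbrs_def by (rule finite_subset[of _ "{..<n}"]) auto

lemma Pmat_edge_action_action:
  assumes "\<phi> < 1" "n \<le> u" "u < 2*n" "n \<le> v" "v < 2*n"
  shows "(u, v) \<in> gedges (2*n) (Pmat n \<epsilon> \<phi> x y t)"
  using assms unfolding gedges_def Pmat_def Let_def by auto

lemma Pmat_edge_opinion_action:
  assumes "0 < \<phi>" "i < n"
  shows "(i, n + i) \<in> gedges (2*n) (Pmat n \<epsilon> \<phi> x y t)"
  using assms unfolding gedges_def Pmat_def Let_def by auto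

lemma Pmat_edge_action_opinion:
  assumes "\<phi> < 1" "n \<le> u" "u < 2*n" "i < n" "nbrs n \<epsilon> x y t i \<noteq> {}"
  shows "(u, i) \<in> gedges (2*n) (Pmat n \<epsilon> \<phi> x y t)"
proof -
  have "card (nbrs n \<epsilon> x y t i) > 0"
    using assms(5) finite_nbrs by (simp add: card_gt_0_iff)
  then show ?thesis
    using assms unfolding gedges_def Pmat_def Let_def by (auto simp: zero_less_mult_iff)
qed

lemma Pmat_inedge_isolated_agent:
  assumes "i < n" "nbrs n \<epsilon> x y t i = {}" "(j, i) \<in> gedges (2*n) (Pmat n \<epsilon> \<phi> x y t)"
  shows "j = i"
  using assms unfolding gedges_def Pmat_def Let_def by (auto split: if_splits)

lemma Pmat_core_connected:
  assumes "0 < \<phi>" "\<phi> < 1" "u \<in> Pmat_core n \<epsilon> x y t" "v \<in> Pmat_core n \<epsilon> x y t"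
  shows "(u, v) \<in> (gedges (2*n) (Pmat n \<epsilon> \<phi> x y t))\<^sup>*"
proof -
  let ?G = "gedges (2*n) (Pmat n \<epsilon> \<phi> x y t)"
  have "n > 0" using assms(3) unfolding Pmat_core_def by auto
  have "(u, n) \<in> ?G\<^sup>*"
  proof (cases "u < n")
    case True
    then have "(u, n + u) \<in> ?G" "(n + u, n) \<in> ?G"
      using assms Pmat_edge_opinion_action Pmat_edge_action_action by auto
    then show ?thesis by (meson r_into_rtrancl rtrancl_into_rtrancl)
  next
    case False
    then show ?thesis using assms \<open>n > 0\<close> Pmat_edge_action_action[of \<phi> n u n]
      unfolding Pmat_core_def by auto
  qed
  moreover have "(n, v) \<in> ?G"
    using assms \<open>n > 0\<close> Pmat_edge_action_action[of \<phi> n n v] Pmat_edge_action_opinion[of \<phi> n n v]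
    unfolding Pmat_core_def by (cases "v < n") auto
  ultimately show ?thesis by (rule rtrancl_into_rtrancl)
qed

theorem theorem2:
  fixes n t :: nat and \<epsilon> \<phi> :: real and x y :: "nat \<Rightarrow> nat \<Rightarrow> real"
  assumes "n \<ge> 1"
    and "0 \<le> \<epsilon>" and "\<epsilon> \<le> 1"
    and "0 < \<phi>" and "\<phi> < 1"
    and "\<forall>i<n. 0 \<le> x 0 i \<and> x 0 i \<le> 1 \<and> 0 \<le> y 0 i \<and> y 0 i \<le> 1"
    and "oa_model n \<epsilon> \<phi> x y"
    and "t \<ge> 1"
  shows "strongly_connected_mat (2*n) (Pmat n \<epsilon> \<phi> x y t)
       \<or> one_sink_singleton_sources (2*n) (Pmat n \<epsilon> \<phi> x y t)"
proof -
  interpret core_with_sources "2*n" "Pmat n \<epsilon> \<phi> x y t" "Pmat_core n \<epsilon> x y t"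
  proof
    show "Pmat_core n \<epsilon> x y t \<subseteq> {..<2*n}" unfolding Pmat_core_def by auto
    show "Pmat_core n \<epsilon> x y t \<noteq> {}" using \<open>n \<ge> 1\<close> unfolding Pmat_core_def by auto
    show "(u, v) \<in> (gedges (2*n) (Pmat n \<epsilon> \<phi> x y t))\<^sup>*"
      if "u \<in> Pmat_core n \<epsilon> x y t" "v \<in> Pmat_core n \<epsilon> x y t" for u v
      using Pmat_core_connected \<open>0 < \<phi>\<close> \<open>\<phi> < 1\<close> that .
    show "j = i" if "i < 2*n" "i \<notin> Pmat_core n \<epsilon> x y t"
      "(j, i) \<in> gedges (2*n) (Pmat n \<epsilon> \<phi> x y t)" for i j
    proof -
      have "i < n" "nbrs n \<epsilon> x y t i = {}" using that(1,2) unfolding Pmat_core_def by auto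
      then show ?thesis using that(3) by (rule Pmat_inedge_isolated_agent)
    qed
  qed
  show ?thesis by (rule strongly_connected_or_one_sink_singleton_sources)
qed

end
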